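(* Let $v$ be a normalized, non-negative, submodular (not necessarily monotone) valuation, and run the mechanism BFM-SWM described in the context with $\ell=2$, $\alpha=1+\frac{2\sqrt{6}}{3}$, $\beta=4$ and any $\epsilon>0$, with all sellers behaving truthfully. Then the output $S^*$ satisfies $$v(S^* )-c(S^* )\ \ge\ 0.0328\cdot v(O)-c(O)-\epsilon/4,$$ where $O$ is an optimal solution of $\max\{v(S)-c(S): S\subseteq\mathcal{N},\ c(S)\le B\}$.
   Context: Setting. $\mathcal{N}$ is a finite set of $n$ sellers. The valuation $v:2^{\mathcal{N}}\to\mathbb{R}_{\ge 0}$ satisfies $v(\emptyset)=0$ and is submodular (for $X\subseteq Y\subseteq\mathcal{N}$ and $u\notin Y$, $v(u\mid Y)\le v(u\mid X)$), where $v(S\mid T)=v(S\cup T)-v(T)$, $v(u\mid T)=v(\{u\}\mid T)$. Each seller $u$ has a private cost $c(u)\ge 0$; $c(X)=\sum_{u\in X}c(u)$, $p(X)=\sum_{u\in X}p(u)$. $B>0$ is the budget, $[\ell]=\{1,\dots,\ell\}$. Sellers behave truthfully: a seller $u$ offered price $q$ accepts iff $c(u)\le q$. Mechanism BFM-SWM (inputs $B$, $\alpha>1$, $\beta>1$, $\epsilon>0$, $\ell\in\{1,2\}$): 1. Offer every seller the price $B$; let $R$ be the set of sellers who accept, and set $p(u)=B$ for $u\in R$. 2. Set $t=0$, $\rho_0=\epsilon/\alpha$, $u^*=\emptyset$ ($u^*$ is a set of at most one seller), and $S_{i,0}=\emptyset$ for $i\in[\ell]$. 3. Repeat rounds: set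 $t\leftarrow t+1$, $\rho_t=\alpha\rho_{t-1}$, $S_{i,t}=\emptyset$ for all $i\in[\ell]$. Process the sellers $u\in R\setminus(\bigcup_{i=1}^{\ell}S_{i,t-1}\cup u^* )$ one at a time in a fixed order. For each such $u$: pick $j\in\arg\max_{i\in[\ell]}v(u\mid S_{i,t})$ (current contents); update $p(u)\leftarrow\min\{p(u),\ v(u\mid S_{j,t})/(\beta+\rho_t/B)\}$ and offer $p(u)$ to $u$. If $u$ accepts: if $v(S_{j,t}\cup\{u\})-p(S_{j,t}\cup\{u\})>\rho_t$ (current prices), set $u^*\leftarrow\{u\}$ and end the round immediately; otherwise add $u$ to $S_{j,t}$. If $u$ rejects, remove $u$ from $R$. After the round, stop if $R\setminus\left(\bigcup_{i=1}^{\ell}(S_{i,t-1}\cup S_{i,t})\cup u^*\right)=\emptyset$; otherwise start another round. 4. Let $M$ be the final value of $t$. Output $S^*\in\arg\max_{A\in\{S_{i,t}: i\in[\ell],\ t\in\{M-1,M\}\}\cup\{u^*\}}\big(v(A)-p(A)\big)$, paying each $u\in S^*$ its current price $p(u)$. *)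

theory Defs
  imports "HOL-Analysis.Analysis"
begin

text \<open>Mechanism BFM-SWM, modelled as a (nondeterministic) relational semantics.
  Nondeterminism only comes from tie-breaking in the two arg-max choices; the theorem
  quantifies over every possible run, i.e. over every tie-breaking rule.
  Sellers are truthful: a seller u offered price q accepts iff c u \<le> q.\<close>

definition marg :: "('a set \<Rightarrow> real) \<Rightarrow> 'a set \<Rightarrow> 'a set \<Rightarrow> real" where
  "marg v S T = v (S \<union> T) - v T"

definition normalized :: "('a set \<Rightarrow> real) \<Rightarrow> bool" where
  "normalized v \<longleftrightarrow> v {} = 0"

definition nonneg_on :: "'a set \<Rightarrow> ('a set \<Rightarrow> real) \<Rightarrow> bool" where
  "nonneg_on N v \<longleftrightarrow> (\<forall>S. S \<subseteq> N \<longrightarrow> v S \<ge> 0)"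

definition submodular_on :: "'a set \<Rightarrow> ('a set \<Rightarrow> real) \<Rightarrow> bool" where
  "submodular_on N v \<longleftrightarrow>
     (\<forall>X Y u. X \<subseteq> Y \<and> Y \<subseteq> N \<and> u \<in> N \<and> u \<notin> Y \<longrightarrow> marg v {u} Y \<le> marg v {u} X)"

text \<open>Arguments: valuation v, cost c, budget B, beta, ell,
  rho (= rho_t), the list of sellers still to be processed in this round,
  then the state before and after: (R, p, ustar, S), where S i is S_{i,t} for i in [ell].
  A round that ends early (ustar updated) stops processing the remaining list.\<close>
inductive bfm_round ::
  "('a set \<Rightarrow> real) \<Rightarrow> ('a \<Rightarrow> real) \<Rightarrow> real \<Rightarrow> real \<Rightarrow> nat \<Rightarrow> real \<Rightarrow> 'a list
   \<Rightarrow> 'a set \<Rightarrow> ('a \<Rightarrow> real) \<Rightarrow> 'a set \<Rightarrow> (nat \<Rightarrow> 'a set)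
   \<Rightarrow> 'a set \<Rightarrow> ('a \<Rightarrow> real) \<Rightarrow> 'a set \<Rightarrow> (nat \<Rightarrow> 'a set) \<Rightarrow> bool"
  for v c B \<beta> l \<rho> where
  nil: "bfm_round v c B \<beta> l \<rho> [] R p us S R p us S"
| accept_stop:
    "\<lbrakk> j \<in> {1..l}; \<forall>i\<in>{1..l}. marg v {u} (S i) \<le> marg v {u} (S j);
       q = min (p u) (marg v {u} (S j) / (\<beta> + \<rho> / B));
       c u \<le> q;
       v (S j \<union> {u}) - sum (p(u := q)) (S j \<union> {u}) > \<rho> \<rbrakk>
     \<Longrightarrow> bfm_round v c B \<beta> l \<rho> (u # us_list) R p us S R (p(u := q)) {u} S"
| accept_add:
    "\<lbrakk> j \<in> {1..l}; \<forall>i\<in>{1..l}. marg v {u} (S i) \<le> marg v {u} (S j);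
       q = min (p u) (marg v {u} (S j) / (\<beta> + \<rho> / B));
       c u \<le> q;
       \<not> (v (S j \<union> {u}) - sum (p(u := q)) (S j \<union> {u}) > \<rho>);
       bfm_round v c B \<beta> l \<rho> us_list R (p(u := q)) us (S(j := S j \<union> {u})) R' p' us' S' \<rbrakk>
     \<Longrightarrow> bfm_round v c B \<beta> l \<rho> (u # us_list) R p us S R' p' us' S'"
| reject:
    "\<lbrakk> j \<in> {1..l}; \<forall>i\<in>{1..l}. marg v {u} (S i) \<le> marg v {u} (S j);
       q = min (p u) (marg v {u} (S j) / (\<beta> + \<rho> / B));
       \<not> c u \<le> q;
       bfm_round v c B \<beta> l \<rho> us_list (R - {u}) (p(u := q)) us S R' p' us' S' \<rbrakk>
     \<Longrightarrow> bfm_round v c B \<beta> l \<rho> (u # us_list) R p us S R' p' us' S'"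

definition bfm_rho :: "real \<Rightarrow> real \<Rightarrow> nat \<Rightarrow> real" where
  "bfm_rho \<alpha> \<epsilon> t = (\<epsilon> / \<alpha>) * \<alpha> ^ t"

definition bfm_stop :: "nat \<Rightarrow> 'a set \<Rightarrow> 'a set \<Rightarrow> (nat \<Rightarrow> 'a set) \<Rightarrow> (nat \<Rightarrow> 'a set) \<Rightarrow> bool" where
  "bfm_stop l R us Sp Sc \<longleftrightarrow> R - ((\<Union>i\<in>{1..l}. Sp i \<union> Sc i) \<union> us) = {}"

text \<open>Reachable states after round t: (t, R, p, ustar, S_{.,t-1}, S_{.,t}).
  Arguments: ground set N, fixed processing order ord, v, c, B, alpha, beta, epsilon, ell.\<close>
inductive bfm_run ::
  "'a set \<Rightarrow> 'a list \<Rightarrow> ('a set \<Rightarrow> real) \<Rightarrow> ('a \<Rightarrow> real) \<Rightarrow> real \<Rightarrow> real \<Rightarrow> real \<Rightarrow> real \<Rightarrow> nat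
   \<Rightarrow> nat \<Rightarrow> 'a set \<Rightarrow> ('a \<Rightarrow> real) \<Rightarrow> 'a set \<Rightarrow> (nat \<Rightarrow> 'a set) \<Rightarrow> (nat \<Rightarrow> 'a set) \<Rightarrow> bool"
  for N ord v c B \<alpha> \<beta> \<epsilon> l where
  init: "bfm_run N ord v c B \<alpha> \<beta> \<epsilon> l 0 {u \<in> N. c u \<le> B} (\<lambda>_. B) {} (\<lambda>_. {}) (\<lambda>_. {})"
| step:
    "\<lbrakk> bfm_run N ord v c B \<alpha> \<beta> \<epsilon> l t R p us Sp Sc;
       t = 0 \<or> \<not> bfm_stop l R us Sp Sc;
       bfm_round v c B \<beta> l (bfm_rho \<alpha> \<epsilon> (Suc t))
         (filter (\<lambda>u. u \<in> R - ((\<Union>i\<in>{1..l}. Sc i) \<union> us)) ord)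
         R p us (\<lambda>_. {}) R' p' us' S' \<rbrakk>
     \<Longrightarrow> bfm_run N ord v c B \<alpha> \<beta> \<epsilon> l (Suc t) R' p' us' Sc S'"

text \<open>Possible outputs (S*, final prices p) of BFM-SWM; each u in S* is paid p u.\<close>
definition bfm_swm_output ::
  "'a set \<Rightarrow> 'a list \<Rightarrow> ('a set \<Rightarrow> real) \<Rightarrow> ('a \<Rightarrow> real) \<Rightarrow> real \<Rightarrow> real \<Rightarrow> real \<Rightarrow> real \<Rightarrow> nat
   \<Rightarrow> 'a set \<Rightarrow> ('a \<Rightarrow> real) \<Rightarrow> bool" where
  "bfm_swm_output N ord v c B \<alpha> \<beta> \<epsilon> l Sstar p \<longleftrightarrow>
     (\<exists>M R us Sp Sc. M \<ge> 1 \<and> bfm_run N ord v c B \<alpha> \<beta> \<epsilon> l M R p us Sp Sc \<and> bfm_stop l R us Sp Sc \<and>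
        (let Cand = {Sp i | i. i \<in> {1..l}} \<union> {Sc i | i. i \<in> {1..l}} \<union> {us} in
          Sstar \<in> Cand \<and> (\<forall>A\<in>Cand. v A - sum p A \<le> v Sstar - sum p Sstar)))"

end

theory Submission
  imports Defs
begin

(* Every seller whose cost is within the budget ends up either in one of the five candidate
   sets (the solutions of the last two rounds and the singleton u-star) or rejected in some
   round s, with marginal value at most (4 + rho_s/B) times its cost with respect to both
   solutions of that round. Since every accepted seller joins the solution to which its marginal
   value is larger, submodularity bounds the value of a set of sellers rejected in round s by the
   values of these two solutions, each at most 4/3 rho_s (prices are at most a quarter of the
   value and the surplus stays below rho_s), plus twice the rate times its cost. The thresholds
   grow geometrically, so all rounds before the last two contribute at most 8/(3 (alpha - 1))
   times the threshold of the second to last round. Splitting O accordingly bounds v(O) by 12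
   times the best candidate surplus, 8 c(O) and multiples of rho_M; and rho_M is at most
   2 alpha times the best candidate surplus plus epsilon, since the last round, or the one before
   it, ended early with a surplus above its threshold. Prices are at least costs, so the true
   surplus of the output is at least its surplus at the final prices. *)

section \<open>Submodular valuations\<close>

lemma submodular_onD:
  assumes "submodular_on N v" "X \<subseteq> Y" "Y \<subseteq> N" "u \<in> N" "u \<notin> Y"
  shows "marg v {u} Y \<le> marg v {u} X"
  using assms unfolding submodular_on_def by blast

lemma submodular_on_le_sum_marg:
  assumes "submodular_on N v" "finite N" "S \<subseteq> N" "T \<subseteq> N"
  shows "v (T \<union> S) \<le> v S + (\<Sum>w\<in>T - S. marg v {w} S)"
proof -
  have "v (F \<union> S) \<le> v S + (\<Sum>w\<in>F. marg v {w} S)" if "finite F" "F \<subseteq> N - S" for F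
    using that
  proof (induction F rule: finite_induct)
    case (insert x F)
    have "marg v {x} (F \<union> S) \<le> marg v {x} S"
      using submodular_onD[OF assms(1), of S "F \<union> S" x] insert assms(3) by auto
    then show ?case
      using insert by (simp add: marg_def)
  qed simp
  moreover have "finite (T - S)" "T - S \<subseteq> N - S"
    using assms(2,4) finite_subset by blast+
  ultimately have "v ((T - S) \<union> S) \<le> v S + (\<Sum>w\<in>T - S. marg v {w} S)"
    by blast
  then show ?thesis
    by (simp add: Un_Diff_cancel2)
qed

lemma submodular_on_marg_antimono:
  assumes "submodular_on N v" "finite N" "C \<subseteq> A" "A \<subseteq> N" "F \<subseteq> N" "F \<inter> A = {}"
  shows "marg v F A \<le> marg v F C"
proof -
  have "finite F"
    using assms(2,5) finite_subset by blast
  then show ?thesis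
    using assms(5,6)
  proof (induction F rule: finite_induct)
    case (insert x F)
    have "marg v {x} (F \<union> A) \<le> marg v {x} (F \<union> C)"
      using submodular_onD[OF assms(1), of "F \<union> C" "F \<union> A" x] insert assms(3,4) by auto
    moreover have "insert x F \<union> A = {x} \<union> (F \<union> A)" "insert x F \<union> C = {x} \<union> (F \<union> C)"
      by auto
    ultimately show ?case
      using insert by (simp add: marg_def)
  qed (simp add: marg_def)
qed

lemma submodular_on_Un_Int:
  assumes "submodular_on N v" "finite N" "A \<subseteq> N" "B \<subseteq> N"
  shows "v (A \<union> B) + v (A \<inter> B) \<le> v A + v B"
proof -
  have "marg v (B - A) A \<le> marg v (B - A) (A \<inter> B)"
    by (rule submodular_on_marg_antimono[OF assms(1,2)]) (use assms(3,4) in auto)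
  moreover have "(B - A) \<union> A = A \<union> B" "(B - A) \<union> (A \<inter> B) = B"
    by auto
  ultimately show ?thesis
    by (simp add: marg_def)
qed

lemma submodular_on_subadditive:
  assumes "submodular_on N v" "finite N" "nonneg_on N v" "A \<subseteq> N" "B \<subseteq> N"
  shows "v (A \<union> B) \<le> v A + v B"
proof -
  have "v (A \<inter> B) \<ge> 0"
    using assms(3,4) unfolding nonneg_on_def by blast
  then show ?thesis
    using submodular_on_Un_Int[OF assms(1,2,4,5)] by linarith
qed

lemma submodular_on_subadditive4:
  assumes "submodular_on N v" "finite N" "nonneg_on N v" "A \<subseteq> N" "B \<subseteq> N" "C \<subseteq> N" "D \<subseteq> N"
  shows "v (A \<union> B \<union> C \<union> D) \<le> v A + v B + v C + v D"
proof -
  note subadditive = submodular_on_subadditive[OF assms(1-3)]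
  have "v (A \<union> B \<union> C \<union> D) \<le> v (A \<union> B \<union> C) + v D"
    using subadditive assms(4-7) by simp
  also have "v (A \<union> B \<union> C) \<le> v (A \<union> B) + v C"
    using subadditive assms(4-6) by simp
  also have "v (A \<union> B) \<le> v A + v B"
    using subadditive assms(4,5) by simp
  finally show ?thesis
    by simp
qed

lemma submodular_on_le_Un_add_Un:
  assumes "submodular_on N v" "finite N" "nonneg_on N v" "T \<subseteq> N" "S1 \<subseteq> N" "S2 \<subseteq> N"
    and "S1 \<inter> S2 = {}"
  shows "v T \<le> v (T \<union> S1) + v (T \<union> S2)"
proof -
  have "(T \<union> S1) \<inter> (T \<union> S2) = T"
    using assms(7) by auto
  moreover have "v ((T \<union> S1) \<union> (T \<union> S2)) \<ge> 0"
    using assms(3) unfolding nonneg_on_def by (simp add: assms(4-6))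
  ultimately show ?thesis
    using submodular_on_Un_Int[OF assms(1,2), of "T \<union> S1" "T \<union> S2"] assms(4-6) by simp
qed

lemma submodular_on_marg_le_singleton:
  assumes "submodular_on N v" "normalized v" "S \<subseteq> N" "u \<in> N" "u \<notin> S"
  shows "marg v {u} S \<le> v {u}"
  using submodular_onD[OF assms(1), of "{}" S u] assms unfolding marg_def normalized_def by simp

section \<open>Pairs of greedily built solutions\<close>

locale procurement =
  fixes N :: "'a set" and v :: "'a set \<Rightarrow> real" and c :: "'a \<Rightarrow> real"
  assumes finite_N: "finite N"
    and normalized_v: "normalized v"
    and nonneg_v: "nonneg_on N v"
    and submodular_v: "submodular_on N v"
    and cost_nonneg: "u \<in> N \<Longrightarrow> c u \<ge> 0"
begin

lemma value_nonneg: "S \<subseteq> N \<Longrightarrow> v S \<ge> 0"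
  using nonneg_v unfolding nonneg_on_def by blast

lemma cost_sum_nonneg: "S \<subseteq> N \<Longrightarrow> sum c S \<ge> 0"
  using cost_nonneg by (meson subsetD sum_nonneg)

lemma marg_Un_singleton_le:
  assumes "S \<subseteq> N" "u \<in> N" "w \<in> N" "w \<notin> S \<union> {u}"
  shows "marg v {w} (S \<union> {u}) \<le> marg v {w} S"
  using submodular_onD[OF submodular_v, of S "S \<union> {u}" w] assms by auto

text \<open>\<open>S1\<close> and \<open>S2\<close> model the two solutions of a round and \<open>Rj\<close> the sellers rejected in
  it. The last two conjuncts hold because every seller joins the solution to which its marginal
  value is larger.\<close>
definition greedy_pair :: "'a set \<Rightarrow> 'a set \<Rightarrow> 'a set \<Rightarrow> real \<Rightarrow> bool" where
  "greedy_pair S1 S2 Rj x \<longleftrightarrow> S1 \<inter> S2 = {} \<and> S1 \<subseteq> N \<and> S2 \<subseteq> N \<and> Rj \<subseteq> N \<and>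
     (\<forall>w\<in>Rj. w \<notin> S1 \<union> S2 \<and> marg v {w} S1 \<le> x * c w \<and> marg v {w} S2 \<le> x * c w) \<and>
     (\<Sum>w\<in>S1. max 0 (marg v {w} S2)) \<le> v S1 \<and> (\<Sum>w\<in>S2. max 0 (marg v {w} S1)) \<le> v S2"

lemma greedy_pair_commute: "greedy_pair S1 S2 Rj x \<longleftrightarrow> greedy_pair S2 S1 Rj x"
  unfolding greedy_pair_def by blast

lemma greedy_pair_empty: "greedy_pair {} {} {} x"
  using normalized_v unfolding greedy_pair_def normalized_def by simp

lemma greedy_pair_insert:
  assumes pair: "greedy_pair S1 S2 Rj x" and u: "u \<in> N" "u \<notin> S1 \<union> S2 \<union> Rj"
    and better: "marg v {u} S2 \<le> marg v {u} S1" and gain: "0 \<le> marg v {u} S1"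
  shows "greedy_pair (S1 \<union> {u}) S2 Rj x"
proof -
  have S1: "S1 \<subseteq> N" "finite S1"
    using pair finite_N finite_subset unfolding greedy_pair_def by blast+
  have "(\<Sum>w\<in>S1 \<union> {u}. max 0 (marg v {w} S2)) = (\<Sum>w\<in>S1. max 0 (marg v {w} S2)) + max 0 (marg v {u} S2)"
    using S1(2) u(2) by simp
  also have "\<dots> \<le> v S1 + marg v {u} S1"
    using pair better gain unfolding greedy_pair_def by (simp add: add_mono)
  also have "\<dots> = v (S1 \<union> {u})"
    unfolding marg_def by (simp add: Un_commute)
  finally have left: "(\<Sum>w\<in>S1 \<union> {u}. max 0 (marg v {w} S2)) \<le> v (S1 \<union> {u})" .
  have "(\<Sum>w\<in>S2. max 0 (marg v {w} (S1 \<union> {u}))) \<le> (\<Sum>w\<in>S2. max 0 (marg v {w} S1))"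
  proof (rule sum_mono)
    fix w assume "w \<in> S2"
    then have "marg v {w} (S1 \<union> {u}) \<le> marg v {w} S1"
      using marg_Un_singleton_le[OF S1(1) u(1)] pair u(2) unfolding greedy_pair_def by blast
    then show "max 0 (marg v {w} (S1 \<union> {u})) \<le> max 0 (marg v {w} S1)"
      by simp
  qed
  then have right: "(\<Sum>w\<in>S2. max 0 (marg v {w} (S1 \<union> {u}))) \<le> v S2"
    using pair unfolding greedy_pair_def by linarith
  have "marg v {w} (S1 \<union> {u}) \<le> x * c w" if "w \<in> Rj" for w
    using marg_Un_singleton_le[OF S1(1) u(1), of w] pair u(2) that unfolding greedy_pair_def by fastforce
  with pair u left right show ?thesis
    unfolding greedy_pair_def by blast
qed

lemma greedy_pair_reject:
  assumes "greedy_pair S1 S2 Rj x" "u \<in> N" "u \<notin> S1 \<union> S2"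
    and "marg v {u} S1 \<le> x * c u" "marg v {u} S2 \<le> x * c u"
  shows "greedy_pair S1 S2 (insert u Rj) x"
  using assms unfolding greedy_pair_def by auto

lemma greedy_pair_Un_le:
  assumes pair: "greedy_pair S1 S2 Rj x" and "x \<ge> 0" and T: "T \<subseteq> Rj \<union> S1 \<union> S2"
  shows "v (T \<union> S1) \<le> v S1 + x * sum c (T \<inter> Rj) + (if T \<inter> S2 = {} then 0 else v S2)"
proof -
  have N: "S1 \<subseteq> N" "S2 \<subseteq> N" "Rj \<subseteq> N" "T \<subseteq> N"
    using pair T unfolding greedy_pair_def by auto
  have fin: "finite S2" "finite Rj" "finite T"
    using N finite_N finite_subset by blast+
  have T_parts: "T - S1 = (T \<inter> Rj) \<union> (T \<inter> S2 - Rj)" "T \<inter> Rj - S1 = T \<inter> Rj"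
    using pair T unfolding greedy_pair_def by auto
  have rejected: "max 0 (marg v {w} S1) \<le> x * c w" if "w \<in> T \<inter> Rj" for w
  proof -
    have "marg v {w} S1 \<le> x * c w" "c w \<ge> 0"
      using pair that N(3) cost_nonneg unfolding greedy_pair_def by auto
    then show ?thesis
      using \<open>x \<ge> 0\<close> by simp
  qed
  have chosen: "(\<Sum>w\<in>T \<inter> S2 - Rj. max 0 (marg v {w} S1)) \<le> (if T \<inter> S2 = {} then 0 else v S2)"
  proof -
    have "(\<Sum>w\<in>T \<inter> S2 - Rj. max 0 (marg v {w} S1)) \<le> (\<Sum>w\<in>S2. max 0 (marg v {w} S1))"
      by (rule sum_mono2) (use fin in auto)
    then show ?thesis
      using pair unfolding greedy_pair_def by auto
  qed
  have "v (T \<union> S1) \<le> v S1 + (\<Sum>w\<in>T - S1. marg v {w} S1)"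
    using submodular_on_le_sum_marg[OF submodular_v finite_N N(1,4)] .
  also have "\<dots> \<le> v S1 + (\<Sum>w\<in>T - S1. max 0 (marg v {w} S1))"
    by (simp add: sum_mono)
  also have "(\<Sum>w\<in>T - S1. max 0 (marg v {w} S1))
      = (\<Sum>w\<in>T \<inter> Rj. max 0 (marg v {w} S1)) + (\<Sum>w\<in>T \<inter> S2 - Rj. max 0 (marg v {w} S1))"
    unfolding T_parts(1) by (rule sum.union_disjoint) (use fin in auto)
  also have "(\<Sum>w\<in>T \<inter> Rj. max 0 (marg v {w} S1)) \<le> x * sum c (T \<inter> Rj)"
    unfolding sum_distrib_left by (rule sum_mono) (rule rejected)
  finally show ?thesis
    using chosen by linarith
qed

lemma greedy_pair_value_le:
  assumes pair: "greedy_pair S1 S2 Rj x" and "x \<ge> 0" and T: "T \<subseteq> Rj \<union> S1 \<union> S2"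
  shows "v T \<le> v S1 + v S2 + 2 * x * sum c (T \<inter> Rj) + (if T \<subseteq> Rj then 0 else v S1 + v S2)"
proof -
  have N: "S1 \<subseteq> N" "S2 \<subseteq> N" "T \<subseteq> N" and disj: "S1 \<inter> S2 = {}" "Rj \<inter> (S1 \<union> S2) = {}"
    using pair T unfolding greedy_pair_def by auto
  have "v T \<le> v (T \<union> S1) + v (T \<union> S2)"
    by (rule submodular_on_le_Un_add_Un[OF submodular_v finite_N nonneg_v N(3,1,2) disj(1)])
  moreover have "v (T \<union> S1) \<le> v S1 + x * sum c (T \<inter> Rj) + (if T \<inter> S2 = {} then 0 else v S2)"
    using greedy_pair_Un_le[OF pair \<open>x \<ge> 0\<close> T] .
  moreover have "v (T \<union> S2) \<le> v S2 + x * sum c (T \<inter> Rj) + (if T \<inter> S1 = {} then 0 else v S1)"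
    using greedy_pair_Un_le[OF iffD1[OF greedy_pair_commute pair] \<open>x \<ge> 0\<close>] T by blast
  moreover have "T \<inter> S1 = {} \<and> T \<inter> S2 = {}" if "T \<subseteq> Rj"
    using that disj by blast
  moreover have "v S1 \<ge> 0" "v S2 \<ge> 0"
    using N value_nonneg by auto
  ultimately show ?thesis
    by (auto split: if_splits)
qed

lemma greedy_pair_value_le_twice:
  assumes "greedy_pair S1 S2 Rj x" "x \<ge> 0" "T \<subseteq> Rj \<union> S1 \<union> S2"
  shows "v T \<le> 2 * (v S1 + v S2) + 2 * x * sum c (T \<inter> Rj)"
proof -
  have "v S1 \<ge> 0" "v S2 \<ge> 0"
    using assms(1) value_nonneg unfolding greedy_pair_def by auto
  then show ?thesis
    using greedy_pair_value_le[OF assms] by (auto split: if_splits)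
qed

lemma greedy_pair_rejected_value_le:
  assumes "greedy_pair S1 S2 Rj x" "x \<ge> 0" "T \<subseteq> Rj"
  shows "v T \<le> v S1 + v S2 + 2 * x * sum c T"
proof -
  have "T \<subseteq> Rj \<union> S1 \<union> S2" "T \<inter> Rj = T"
    using assms(3) by blast+
  then show ?thesis
    using greedy_pair_value_le[OF assms(1,2), of T] assms(3) by simp
qed

lemma greedy_pair_insert_at:
  fixes S :: "nat \<Rightarrow> 'a set"
  assumes pair: "greedy_pair (S 1) (S 2) Rj x" and j: "j \<in> {1, 2}"
    and best: "\<forall>i\<in>{1, 2}. marg v {u} (S i) \<le> marg v {u} (S j)" and gain: "0 \<le> marg v {u} (S j)"
    and u: "u \<in> N" "u \<notin> S 1 \<union> S 2 \<union> Rj"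
  shows "greedy_pair ((S(j := S j \<union> {u})) 1) ((S(j := S j \<union> {u})) 2) Rj x"
proof (cases "j = 1")
  case True
  then show ?thesis
    using greedy_pair_insert[OF pair u] best gain by simp
next
  case False
  then have "j = 2"
    using j by simp
  then show ?thesis
    using greedy_pair_insert[OF iffD1[OF greedy_pair_commute pair] u(1)] u(2) best gain
    by (simp add: greedy_pair_commute Un_commute)
qed

end

section \<open>One round of the mechanism\<close>

lemma atLeastAtMost_1_2: "{1..2::nat} = {1, 2}"
  by auto

lemma sum_fun_upd_Un_singleton:
  assumes "finite A" "u \<notin> A"
  shows "sum (p(u := q)) (A \<union> {u}) = sum p A + q"
proof -
  have "sum (p(u := q)) A = sum p A"
    using assms(2) by (intro sum.cong) auto
  then show ?thesis
    using assms by (simp add: add.commute)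
qed

locale bfm_instance = procurement N v c
  for N :: "'a set" and v :: "'a set \<Rightarrow> real" and c :: "'a \<Rightarrow> real" +
  fixes ord :: "'a list" and B \<alpha> \<epsilon> :: real
  assumes distinct_ord: "distinct ord" and set_ord: "set ord = N"
    and budget_pos: "B > 0" and alpha_gt_1: "\<alpha> > 1" and eps_pos: "\<epsilon> > 0"
begin

text \<open>Offers in a round with threshold \<open>\<rho>\<close> are marginal values divided by \<open>rate \<rho>\<close>, so a
  seller who rejects has marginal value below \<open>rate \<rho>\<close> times its cost.\<close>
abbreviation rate :: "real \<Rightarrow> real" where
  "rate \<rho> \<equiv> 4 + \<rho> / B"

definition priced :: "('a \<Rightarrow> real) \<Rightarrow> real \<Rightarrow> 'a set \<Rightarrow> bool" where
  "priced p \<rho> A \<longleftrightarrow> 4 * sum p A \<le> v A \<and> v A - sum p A \<le> \<rho>"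

lemma rate_ge_4: "\<rho> \<ge> 0 \<Longrightarrow> rate \<rho> \<ge> 4"
  using budget_pos by simp

lemma accepted_price_le:
  assumes "\<rho> \<ge> 0" "0 \<le> c u" "c u \<le> q" "q \<le> m / rate \<rho>"
  shows "0 \<le> q" "4 * q \<le> m"
proof -
  show "0 \<le> q"
    using assms(2,3) by linarith
  have "rate \<rho> * q \<le> m"
    using assms(4) rate_ge_4[OF assms(1)] by (simp add: field_simps)
  moreover have "4 * q \<le> rate \<rho> * q"
    using rate_ge_4[OF assms(1)] \<open>0 \<le> q\<close> by (simp add: mult_right_mono)
  ultimately show "4 * q \<le> m"
    by linarith
qed

lemma rejected_marg_le:
  assumes "\<rho> \<ge> 0" "c u \<le> p u" "q = min (p u) (m / rate \<rho>)" "\<not> c u \<le> q"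
  shows "m \<le> rate \<rho> * c u"
proof -
  have "m / rate \<rho> < c u"
    using assms(2-4) by (auto simp: min_def split: if_splits)
  then show ?thesis
    using rate_ge_4[OF assms(1)] by (simp add: divide_less_eq less_imp_le mult.commute)
qed

lemma priced_fun_upd:
  assumes "priced p \<rho> A" "u \<notin> A"
  shows "priced (p(u := q)) \<rho> A"
proof -
  have "sum (p(u := q)) A = sum p A"
    using assms(2) by (intro sum.cong) auto
  then show ?thesis
    using assms(1) unfolding priced_def by simp
qed

lemma priced_Un_singleton:
  assumes "priced p \<rho> S" "finite S" "u \<notin> S" "4 * q \<le> marg v {u} S"
    and "\<not> v (S \<union> {u}) - sum (p(u := q)) (S \<union> {u}) > \<rho>"
  shows "priced (p(u := q)) \<rho> (S \<union> {u})"
proof -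
  have "sum (p(u := q)) (S \<union> {u}) = sum p S + q"
    using sum_fun_upd_Un_singleton assms(2,3) .
  then show ?thesis
    using assms(1,4,5) unfolding priced_def marg_def by (auto simp: Un_commute)
qed

lemma early_stop_surplus:
  assumes "S \<subseteq> N" "u \<in> N" "u \<notin> S" "4 * q \<le> marg v {u} S"
    and "v (S \<union> {u}) - sum (p(u := q)) (S \<union> {u}) > \<rho>"
  shows "4 * q \<le> v {u}" "v S - sum p S + (v {u} - q) > \<rho>"
proof -
  have "marg v {u} S \<le> v {u}"
    by (rule submodular_on_marg_le_singleton[OF submodular_v normalized_v assms(1-3)])
  then show "4 * q \<le> v {u}"
    using assms(4) by linarith
  have "v (S \<union> {u}) \<le> v S + v {u}"
    using \<open>marg v {u} S \<le> v {u}\<close> unfolding marg_def by (simp add: Un_commute)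
  moreover have "sum (p(u := q)) (S \<union> {u}) = sum p S + q"
    using sum_fun_upd_Un_singleton finite_subset[OF assms(1) finite_N] assms(3) .
  ultimately show "v S - sum p S + (v {u} - q) > \<rho>"
    using assms(5) by linarith
qed

text \<open>\<open>R0\<close> is the set of remaining sellers when the round starts, so \<open>R0 - R'\<close> are the
  sellers rejected in the round.\<close>
definition round_post ::
  "real \<Rightarrow> 'a list \<Rightarrow> 'a set \<Rightarrow> 'a set \<Rightarrow> ('a \<Rightarrow> real) \<Rightarrow> 'a set \<Rightarrow> (nat \<Rightarrow> 'a set)
   \<Rightarrow> 'a set \<Rightarrow> ('a \<Rightarrow> real) \<Rightarrow> 'a set \<Rightarrow> (nat \<Rightarrow> 'a set) \<Rightarrow> bool" where
  "round_post \<rho> xs R0 R p us S R' p' us' S' \<longleftrightarrow>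
     R' \<subseteq> R \<and> R - R' \<subseteq> set xs \<and> (\<forall>u\<in>R'. c u \<le> p' u) \<and> (\<forall>u. u \<notin> set xs \<longrightarrow> p' u = p u) \<and>
     (\<forall>i\<in>{1, 2}. S i \<subseteq> S' i \<and> S' i \<subseteq> R' \<and> priced p' \<rho> (S' i)) \<and>
     greedy_pair (S' 1) (S' 2) (R0 - R') (rate \<rho>) \<and>
     ((us' = us \<and> set xs \<subseteq> S' 1 \<union> S' 2 \<union> (R - R')) \<or>
      (\<exists>u\<in>set xs. us' = {u} \<and> u \<in> R' \<and> 4 * p' u \<le> v {u} \<and>
         (\<exists>j\<in>{1, 2}. v (S' j) - sum p' (S' j) + (v {u} - p' u) > \<rho>)))"

definition round_invariant ::
  "real \<Rightarrow> 'a list \<Rightarrow> 'a set \<Rightarrow> 'a set \<Rightarrow> ('a \<Rightarrow> real) \<Rightarrow> (nat \<Rightarrow> 'a set) \<Rightarrow> bool" where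
  "round_invariant \<rho> xs R0 R p S \<longleftrightarrow>
     distinct xs \<and> set xs \<subseteq> R \<and> R \<subseteq> R0 \<and> R0 \<subseteq> N \<and> set xs \<inter> (S 1 \<union> S 2) = {} \<and>
     greedy_pair (S 1) (S 2) (R0 - R) (rate \<rho>) \<and> (\<forall>u\<in>R. c u \<le> p u) \<and>
     (\<forall>i\<in>{1, 2}. S i \<subseteq> R \<and> priced p \<rho> (S i))"

lemma round_post_stop:
  assumes inv: "round_invariant \<rho> (u # xs) R0 R p S" and "\<rho> \<ge> 0"
    and j: "j \<in> {1..2}" and q: "q = min (p u) (marg v {u} (S j) / rate \<rho>)" "c u \<le> q"
    and stop: "v (S j \<union> {u}) - sum (p(u := q)) (S j \<union> {u}) > \<rho>"
  shows "round_post \<rho> (u # xs) R0 R p us S R (p(u := q)) {u} S"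
proof -
  have u: "u \<in> R" "u \<in> N" "u \<notin> S 1 \<union> S 2"
    using inv unfolding round_invariant_def by auto
  have j12: "j \<in> {1, 2}"
    using j by (auto simp: atLeastAtMost_1_2)
  then have Sj: "u \<notin> S j" "S j \<subseteq> N"
    using inv u(3) unfolding round_invariant_def by auto
  have "q \<le> marg v {u} (S j) / rate \<rho>"
    using q(1) by simp
  note accepted_price_le[OF \<open>\<rho> \<ge> 0\<close> cost_nonneg[OF u(2)] q(2) this]
  note surplus = early_stop_surplus[OF Sj(2) u(2) Sj(1) this(2) stop]
  have "sum (p(u := q)) (S j) = sum p (S j)"
    using Sj(1) by (intro sum.cong) auto
  then show ?thesis
    using q(2) inv u j12 priced_fun_upd surplus unfolding round_post_def round_invariant_def by (auto 4 3)
qed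

lemma round_invariant_accept:
  assumes inv: "round_invariant \<rho> (u # xs) R0 R p S" and "\<rho> \<ge> 0"
    and j: "j \<in> {1..2}" and best: "\<forall>i\<in>{1..2}. marg v {u} (S i) \<le> marg v {u} (S j)"
    and q: "q = min (p u) (marg v {u} (S j) / rate \<rho>)" "c u \<le> q"
    and keep: "\<not> v (S j \<union> {u}) - sum (p(u := q)) (S j \<union> {u}) > \<rho>"
  shows "round_invariant \<rho> xs R0 R (p(u := q)) (S(j := S j \<union> {u}))"
proof -
  let ?S = "S(j := S j \<union> {u})"
  have u: "u \<in> R" "u \<in> N" "u \<notin> S 1 \<union> S 2" "u \<notin> R0 - R" "u \<notin> set xs"
    using inv unfolding round_invariant_def by auto
  have j12: "j \<in> {1, 2}"
    using j by (auto simp: atLeastAtMost_1_2)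
  then have Sj: "u \<notin> S j" "S j \<subseteq> N" "priced p \<rho> (S j)"
    using inv u(3) unfolding round_invariant_def by auto
  have "q \<le> marg v {u} (S j) / rate \<rho>"
    using q(1) by simp
  note offer = accepted_price_le[OF \<open>\<rho> \<ge> 0\<close> cost_nonneg[OF u(2)] q(2) this]
  have pair: "greedy_pair (?S 1) (?S 2) (R0 - R) (rate \<rho>)"
    by (rule greedy_pair_insert_at[OF _ j12])
       (use inv best offer u in \<open>auto simp: round_invariant_def atLeastAtMost_1_2\<close>)
  note Sj_priced = priced_Un_singleton[OF Sj(3) finite_subset[OF Sj(2) finite_N] Sj(1) offer(2) keep]
  have priced: "\<forall>i\<in>{1, 2}. ?S i \<subseteq> R \<and> priced (p(u := q)) \<rho> (?S i)"
  proof
    fix i :: nat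
    assume i: "i \<in> {1, 2}"
    have "S i \<subseteq> R" "priced p \<rho> (S i)"
      using inv i unfolding round_invariant_def by auto
    then show "?S i \<subseteq> R \<and> priced (p(u := q)) \<rho> (?S i)"
      using Sj_priced priced_fun_upd[of p \<rho> "S i" u q] u(1,3) i by (cases "i = j") auto
  qed
  have "\<forall>w\<in>R. c w \<le> (p(u := q)) w"
    using inv q(2) unfolding round_invariant_def by simp
  moreover have "set xs \<inter> (?S 1 \<union> ?S 2) = {}"
    using inv u(5) unfolding round_invariant_def by auto
  ultimately show ?thesis
    using inv pair priced unfolding round_invariant_def by simp
qed

lemma round_invariant_reject:
  assumes inv: "round_invariant \<rho> (u # xs) R0 R p S" and "\<rho> \<ge> 0"
    and best: "\<forall>i\<in>{1..2}. marg v {u} (S i) \<le> marg v {u} (S j)"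
    and q: "q = min (p u) (marg v {u} (S j) / rate \<rho>)" "\<not> c u \<le> q"
  shows "round_invariant \<rho> xs R0 (R - {u}) (p(u := q)) S"
proof -
  have u: "u \<in> R" "u \<in> N" "u \<notin> S 1 \<union> S 2" "c u \<le> p u"
    using inv unfolding round_invariant_def by auto
  have "marg v {u} (S j) \<le> rate \<rho> * c u"
    by (rule rejected_marg_le[where p = p and u = u, OF \<open>\<rho> \<ge> 0\<close> u(4) q])
  moreover have "\<forall>i\<in>{1, 2}. marg v {u} (S i) \<le> marg v {u} (S j)"
    using best unfolding atLeastAtMost_1_2 .
  ultimately have "marg v {u} (S 1) \<le> rate \<rho> * c u" "marg v {u} (S 2) \<le> rate \<rho> * c u"
    by (meson insertCI order_trans)+
  then have "greedy_pair (S 1) (S 2) (insert u (R0 - R)) (rate \<rho>)"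
    using greedy_pair_reject inv u(2,3) unfolding round_invariant_def by blast
  moreover have "insert u (R0 - R) = R0 - (R - {u})"
    using u(1) inv unfolding round_invariant_def by auto
  moreover have "\<forall>i\<in>{1, 2}. S i \<subseteq> R - {u} \<and> priced (p(u := q)) \<rho> (S i)"
    using inv u(3) priced_fun_upd unfolding round_invariant_def by blast
  moreover have "\<forall>w\<in>R - {u}. c w \<le> (p(u := q)) w"
    using inv unfolding round_invariant_def by simp
  ultimately show ?thesis
    using inv unfolding round_invariant_def by auto
qed

lemma bfm_round_post:
  assumes "bfm_round v c B 4 2 \<rho> xs R p us S R' p' us' S'" and "\<rho> \<ge> 0"
    and "round_invariant \<rho> xs R0 R p S"
  shows "round_post \<rho> xs R0 R p us S R' p' us' S'"
  using assms(1,3)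
proof (induction rule: bfm_round.induct)
  case (nil R p us S)
  then show ?case
    unfolding round_post_def round_invariant_def by auto
next
  case (accept_stop j u S q p us_list R us)
  show ?case
    by (rule round_post_stop[OF accept_stop.prems \<open>\<rho> \<ge> 0\<close> accept_stop.hyps(1,3-5)])
next
  case (accept_add j u S q p us_list R us R' p' us' S')
  have "round_post \<rho> us_list R0 R (p(u := q)) us (S(j := S j \<union> {u})) R' p' us' S'"
    using accept_add.IH round_invariant_accept[OF accept_add.prems \<open>\<rho> \<ge> 0\<close> accept_add.hyps(1-5)] .
  then show ?case
    using accept_add.hyps(1) unfolding round_post_def atLeastAtMost_1_2 by (auto split: if_splits)
next
  case (reject j u S q p us_list R us R' p' us' S')
  have "round_post \<rho> us_list R0 (R - {u}) (p(u := q)) us S R' p' us' S'"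
    using reject.IH round_invariant_reject[OF reject.prems \<open>\<rho> \<ge> 0\<close> reject.hyps(2-4)] .
  moreover have "u \<in> R"
    using reject.prems unfolding round_invariant_def by auto
  ultimately show ?case
    unfolding round_post_def by (auto split: if_splits)
qed

section \<open>The invariant of a run\<close>

abbreviation rho :: "nat \<Rightarrow> real" where
  "rho t \<equiv> bfm_rho \<alpha> \<epsilon> t"

lemma rho_pos: "rho t > 0"
  using alpha_gt_1 eps_pos unfolding bfm_rho_def by simp

lemma rho_Suc: "rho (Suc t) = \<alpha> * rho t"
  unfolding bfm_rho_def by simp

lemma rho_Suc_div: "rho (Suc t) / \<alpha> = rho t"
  using alpha_gt_1 unfolding rho_Suc by simp

lemma rho_1: "rho 1 = \<epsilon>"
  using alpha_gt_1 unfolding bfm_rho_def by simp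

lemma priced_empty: "\<rho> \<ge> 0 \<Longrightarrow> priced p \<rho> {}"
  using normalized_v unfolding priced_def normalized_def by simp

lemma priced_value_le: "priced p \<rho> A \<Longrightarrow> v A \<le> 4 / 3 * \<rho>"
  unfolding priced_def by linarith

definition run_state ::
  "nat \<Rightarrow> 'a set \<Rightarrow> ('a \<Rightarrow> real) \<Rightarrow> 'a set \<Rightarrow> (nat \<Rightarrow> 'a set) \<Rightarrow> (nat \<Rightarrow> 'a set) \<Rightarrow> bool" where
  "run_state t R p us Sp Sc \<longleftrightarrow>
     R \<subseteq> {u \<in> N. c u \<le> B} \<and> (\<forall>u\<in>R. c u \<le> p u) \<and>
     us \<subseteq> R \<and> (us = {} \<or> (\<exists>u. us = {u} \<and> 4 * p u \<le> v {u})) \<and>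
     (\<forall>i\<in>{1, 2}. Sp i \<subseteq> R \<and> Sc i \<subseteq> R \<and> priced p (rho t / \<alpha>) (Sp i) \<and> priced p (rho t) (Sc i))"

text \<open>\<open>Rp\<close> and \<open>Rc\<close> contain the sellers rejected in rounds \<open>t - 1\<close> and \<open>t\<close>, \<open>Old\<close> those
  rejected earlier. A set of sellers rejected in round \<open>s\<close> is worth at most \<open>8/3 \<cdot> rho s\<close> plus
  twice the rate times its cost; as \<open>rho\<close> grows by the factor \<open>\<alpha>\<close>, the rounds before \<open>t - 1\<close>
  contribute at most \<open>8 / (3 (\<alpha> - 1)) \<cdot> rho (t - 1)\<close>.\<close>
definition run_rejections :: "nat \<Rightarrow> 'a set \<Rightarrow> (nat \<Rightarrow> 'a set) \<Rightarrow> (nat \<Rightarrow> 'a set) \<Rightarrow> bool" where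
  "run_rejections t R Sp Sc \<longleftrightarrow>
     (\<exists>Old Rp Rc. {u \<in> N. c u \<le> B} - R \<subseteq> Old \<union> Rp \<union> Rc \<and> Old \<subseteq> N \<and>
        greedy_pair (Sp 1) (Sp 2) Rp (rate (rho t / \<alpha>)) \<and> greedy_pair (Sc 1) (Sc 2) Rc (rate (rho t)) \<and>
        (\<forall>T\<subseteq>Old. v T \<le> 8 / (3 * (\<alpha> - 1)) * (rho t / \<alpha>) + 2 * rate (rho t / \<alpha>) * sum c T))"

text \<open>Round \<open>t\<close> either ended early at \<open>u\<^sup>*\<close>, or it completed; then the mechanism stops, and
  round \<open>t - 1\<close>, if any, ended early.\<close>
definition run_history ::
  "nat \<Rightarrow> 'a set \<Rightarrow> ('a \<Rightarrow> real) \<Rightarrow> 'a set \<Rightarrow> (nat \<Rightarrow> 'a set) \<Rightarrow> (nat \<Rightarrow> 'a set) \<Rightarrow> bool" where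
  "run_history t R p us Sp Sc \<longleftrightarrow> 1 \<le> t \<longrightarrow>
     (\<exists>j\<in>{1, 2}. v (Sc j) - sum p (Sc j) + (v us - sum p us) > rho t) \<or>
     (bfm_stop 2 R us Sp Sc \<and>
      (2 \<le> t \<longrightarrow> (\<exists>j\<in>{1, 2}. v (Sp j) - sum p (Sp j) + (v us - sum p us) > rho t / \<alpha>)))"

definition run_invariant ::
  "nat \<Rightarrow> 'a set \<Rightarrow> ('a \<Rightarrow> real) \<Rightarrow> 'a set \<Rightarrow> (nat \<Rightarrow> 'a set) \<Rightarrow> (nat \<Rightarrow> 'a set) \<Rightarrow> bool" where
  "run_invariant t R p us Sp Sc \<longleftrightarrow>
     run_state t R p us Sp Sc \<and> run_rejections t R Sp Sc \<and> run_history t R p us Sp Sc"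

lemma run_invariant_init:
  "run_invariant 0 {u \<in> N. c u \<le> B} (\<lambda>_. B) {} (\<lambda>_. {}) (\<lambda>_. {})"
proof -
  have "rho 0 / \<alpha> \<ge> 0" "8 / (3 * (\<alpha> - 1)) * (rho 0 / \<alpha>) \<ge> 0"
    using rho_pos[of 0] alpha_gt_1 by simp_all
  then show ?thesis
    using greedy_pair_empty priced_empty rho_pos[of 0] normalized_v
    unfolding run_invariant_def run_state_def run_rejections_def run_history_def normalized_def
    by (auto intro!: exI[of _ "{}"])
qed

lemma bfm_run_round_post:
  assumes "run_state t R p us Sp Sc"
    and "bfm_round v c B 4 2 (rho (Suc t)) xs R p us (\<lambda>_. {}) R' p' us' S'"
    and "xs = filter (\<lambda>u. u \<in> R - ((\<Union>i\<in>{1..2}. Sc i) \<union> us)) ord"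
  shows "set xs = R - (Sc 1 \<union> Sc 2 \<union> us)"
    and "round_post (rho (Suc t)) xs R R p us (\<lambda>_. {}) R' p' us' S'"
proof -
  have R: "R \<subseteq> N" "\<forall>u\<in>R. c u \<le> p u"
    using assms(1) unfolding run_state_def by auto
  show xs: "set xs = R - (Sc 1 \<union> Sc 2 \<union> us)"
    using assms(3) R(1) set_ord unfolding atLeastAtMost_1_2 by auto
  have "greedy_pair {} {} (R - R) (rate (rho (Suc t)))"
    using greedy_pair_empty by simp
  then have "round_invariant (rho (Suc t)) xs R R p (\<lambda>_. {})"
    using assms(3) distinct_ord xs R priced_empty[OF less_imp_le[OF rho_pos]]
    unfolding round_invariant_def by auto
  then show "round_post (rho (Suc t)) xs R R p us (\<lambda>_. {}) R' p' us' S'"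
    by (rule bfm_round_post[OF assms(2) less_imp_le[OF rho_pos]])
qed

lemma run_state_step:
  assumes state: "run_state t R p us Sp Sc" and xs: "set xs = R - (Sc 1 \<union> Sc 2 \<union> us)"
    and post: "round_post (rho (Suc t)) xs R R p us (\<lambda>_. {}) R' p' us' S'"
  shows "run_state (Suc t) R' p' us' Sc S'"
proof -
  have kept: "A \<subseteq> R'" "sum p' A = sum p A" if "A \<subseteq> R" "A \<inter> set xs = {}" for A
    using post that unfolding round_post_def by (auto intro!: sum.cong)
  have Sc: "Sc i \<subseteq> R' \<and> priced p' (rho (Suc t) / \<alpha>) (Sc i)" if i: "i \<in> {1, 2}" for i
  proof -
    have "Sc i \<subseteq> R" "priced p (rho t) (Sc i)"
      using state i unfolding run_state_def by auto
    moreover have "Sc i \<inter> set xs = {}"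
      using xs i by auto
    ultimately show ?thesis
      using kept[of "Sc i"] unfolding priced_def rho_Suc_div by simp
  qed
  have us: "us' \<subseteq> R' \<and> (us' = {} \<or> (\<exists>u. us' = {u} \<and> 4 * p' u \<le> v {u}))"
  proof (cases "us' = us")
    case True
    have "us \<subseteq> R'" "\<forall>u\<in>us. p' u = p u"
      using state kept(1)[of us] xs post unfolding run_state_def round_post_def by auto
    then show ?thesis
      using True state unfolding run_state_def by auto
  next
    case False
    then show ?thesis
      using post unfolding round_post_def by auto
  qed
  show ?thesis
    using state post Sc us unfolding run_state_def round_post_def by auto
qed

lemma rejected_value_bound_step:
  assumes "Old \<subseteq> N" "greedy_pair S1 S2 Rp (rate y)" "priced p y S1" "priced p y S2" "y \<ge> 0"
    and old: "\<forall>T\<subseteq>Old. v T \<le> 8 / (3 * (\<alpha> - 1)) * y + 2 * rate y * sum c T"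
  shows "\<forall>T\<subseteq>Old \<union> Rp. v T \<le> 8 / (3 * (\<alpha> - 1)) * (\<alpha> * y) + 2 * rate (\<alpha> * y) * sum c T"
proof (intro allI impI)
  fix T
  assume T: "T \<subseteq> Old \<union> Rp"
  have N: "T \<subseteq> N" "Rp \<subseteq> N"
    using T assms(1,2) unfolding greedy_pair_def by auto
  have split: "v T \<le> v (T \<inter> Old) + v (T - Old)"
    using submodular_on_subadditive[OF submodular_v finite_N nonneg_v, of "T \<inter> Old" "T - Old"] N(1)
    by (auto simp: Int_Diff_Un)
  have old_part: "v (T \<inter> Old) \<le> 8 / (3 * (\<alpha> - 1)) * y + 2 * rate y * sum c (T \<inter> Old)"
    using old by blast
  have rejected: "T - Old \<subseteq> Rp"
    using T by blast
  have "v (T - Old) \<le> v S1 + v S2 + 2 * rate y * sum c (T - Old)"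
    using greedy_pair_rejected_value_le[OF assms(2) _ rejected] rate_ge_4[OF assms(5)] by simp
  then have new_part: "v (T - Old) \<le> 8 / 3 * y + 2 * rate y * sum c (T - Old)"
    using priced_value_le[OF assms(3)] priced_value_le[OF assms(4)] by simp
  have geometric: "8 / (3 * (\<alpha> - 1)) * y + 8 / 3 * y = 8 / (3 * (\<alpha> - 1)) * (\<alpha> * y)"
    using alpha_gt_1 by (simp add: field_simps)
  have costs: "2 * rate y * sum c T = 2 * rate y * sum c (T \<inter> Old) + 2 * rate y * sum c (T - Old)"
    using sum.Int_Diff[OF finite_subset[OF N(1) finite_N], of c Old] by (simp add: distrib_left)
  have "y \<le> \<alpha> * y"
    using mult_right_mono[of 1 \<alpha> y] alpha_gt_1 assms(5) by simp
  then have "y / B \<le> (\<alpha> * y) / B"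
    using budget_pos by (simp add: divide_right_mono)
  then have "2 * rate y * sum c T \<le> 2 * rate (\<alpha> * y) * sum c T"
    using cost_sum_nonneg[OF N(1)] by (intro mult_right_mono) auto
  then show "v T \<le> 8 / (3 * (\<alpha> - 1)) * (\<alpha> * y) + 2 * rate (\<alpha> * y) * sum c T"
    using split old_part new_part geometric costs by linarith
qed

lemma run_rejections_step:
  assumes state: "run_state t R p us Sp Sc" and rej: "run_rejections t R Sp Sc"
    and post: "round_post (rho (Suc t)) xs R R p us (\<lambda>_. {}) R' p' us' S'"
  shows "run_rejections (Suc t) R' Sc S'"
proof -
  obtain Old Rp Rc where cover: "{u \<in> N. c u \<le> B} - R \<subseteq> Old \<union> Rp \<union> Rc" and "Old \<subseteq> N"
    and pairs: "greedy_pair (Sp 1) (Sp 2) Rp (rate (rho t / \<alpha>))" "greedy_pair (Sc 1) (Sc 2) Rc (rate (rho t))"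
    and old: "\<forall>T\<subseteq>Old. v T \<le> 8 / (3 * (\<alpha> - 1)) * (rho t / \<alpha>) + 2 * rate (rho t / \<alpha>) * sum c T"
    using rej unfolding run_rejections_def by blast
  have "priced p (rho t / \<alpha>) (Sp 1)" "priced p (rho t / \<alpha>) (Sp 2)"
    using state unfolding run_state_def by auto
  moreover have "rho t / \<alpha> \<ge> 0"
    using rho_pos[of t] alpha_gt_1 by simp
  ultimately have "\<forall>T\<subseteq>Old \<union> Rp. v T \<le> 8 / (3 * (\<alpha> - 1)) * (rho (Suc t) / \<alpha>) + 2 * rate (rho (Suc t) / \<alpha>) * sum c T"
    using rejected_value_bound_step[OF \<open>Old \<subseteq> N\<close> pairs(1) _ _ _ old] alpha_gt_1 by (simp add: rho_Suc)
  moreover have "{u \<in> N. c u \<le> B} - R' \<subseteq> (Old \<union> Rp) \<union> Rc \<union> (R - R')" "Old \<union> Rp \<subseteq> N"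
    using cover \<open>Old \<subseteq> N\<close> pairs(1) unfolding greedy_pair_def by auto
  moreover have "greedy_pair (Sc 1) (Sc 2) Rc (rate (rho (Suc t) / \<alpha>))"
    using pairs(2) alpha_gt_1 by (simp add: rho_Suc)
  moreover have "greedy_pair (S' 1) (S' 2) (R - R') (rate (rho (Suc t)))"
    using post unfolding round_post_def by blast
  ultimately show ?thesis
    unfolding run_rejections_def by blast
qed

lemma run_history_step:
  assumes state: "run_state t R p us Sp Sc" and hist: "run_history t R p us Sp Sc"
    and continue: "t = 0 \<or> \<not> bfm_stop 2 R us Sp Sc"
    and xs: "set xs = R - (Sc 1 \<union> Sc 2 \<union> us)"
    and post: "round_post (rho (Suc t)) xs R R p us (\<lambda>_. {}) R' p' us' S'"
  shows "run_history (Suc t) R' p' us' Sc S'"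
proof (cases "us' = us \<and> set xs \<subseteq> S' 1 \<union> S' 2 \<union> (R - R')")
  case True
  have unchanged: "sum p' A = sum p A" if "A \<inter> set xs = {}" for A
    using post that unfolding round_post_def by (auto intro!: sum.cong)
  have "bfm_stop 2 R' us' Sc S'"
    using True post xs unfolding bfm_stop_def round_post_def atLeastAtMost_1_2 by auto
  moreover have "\<exists>j\<in>{1, 2}. v (Sc j) - sum p' (Sc j) + (v us' - sum p' us') > rho (Suc t) / \<alpha>"
    if "2 \<le> Suc t"
  proof -
    have "\<exists>j\<in>{1, 2}. v (Sc j) - sum p (Sc j) + (v us - sum p us) > rho t"
      using hist continue that unfolding run_history_def by auto
    moreover have "sum p' us = sum p us" "sum p' (Sc 1) = sum p (Sc 1)" "sum p' (Sc 2) = sum p (Sc 2)"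
      using unchanged xs by auto
    ultimately show ?thesis
      using True by (auto simp: rho_Suc_div)
  qed
  ultimately show ?thesis
    unfolding run_history_def by blast
next
  case False
  then show ?thesis
    using post unfolding round_post_def run_history_def by auto
qed

lemma bfm_run_invariant:
  "bfm_run N ord v c B \<alpha> 4 \<epsilon> 2 t R p us Sp Sc \<Longrightarrow> run_invariant t R p us Sp Sc"
proof (induction rule: bfm_run.induct)
  case init
  show ?case
    by (rule run_invariant_init)
next
  case (step t R p us Sp Sc R' p' us' S')
  have state: "run_state t R p us Sp Sc"
    using step.IH unfolding run_invariant_def by blast
  note round = bfm_run_round_post[OF state step.hyps(3) refl]
  show ?case
    using step.IH step.hyps(2) run_state_step[OF state round] run_rejections_step[OF state _ round(2)]
      run_history_step[OF state _ step.hyps(2) round]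
    unfolding run_invariant_def by blast
qed

section \<open>The final state\<close>

lemma run_state_candidate:
  assumes "run_state t R p us Sp Sc" "A \<in> {us, Sp 1, Sp 2, Sc 1, Sc 2}"
  shows "A \<subseteq> R" "4 * sum p A \<le> v A"
  using assms normalized_v unfolding run_state_def priced_def normalized_def by auto

lemma surplus_bound_nonneg:
  assumes "run_state t R p us Sp Sc" "\<forall>A\<in>{us, Sp 1, Sp 2, Sc 1, Sc 2}. v A - sum p A \<le> best"
  shows "0 \<le> best"
proof -
  have "sum p us \<ge> 0"
    using assms(1) cost_nonneg unfolding run_state_def by (force intro: sum_nonneg)
  then have "v us - sum p us \<ge> 0"
    using run_state_candidate[OF assms(1), of us] by simp
  then show ?thesis
    using assms(2) by auto
qed

lemma rho_le_surplus_bound: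
  assumes "run_history t R p us Sp Sc" "1 \<le> t"
    and best: "\<forall>A\<in>{us, Sp 1, Sp 2, Sc 1, Sc 2}. v A - sum p A \<le> best" "0 \<le> best"
  shows "rho t \<le> 2 * \<alpha> * best + \<epsilon>"
proof -
  have "2 * best \<le> 2 * \<alpha> * best"
    using mult_right_mono[of 1 \<alpha> best] alpha_gt_1 best(2) by simp
  moreover consider "rho t < 2 * best" | "rho t / \<alpha> < 2 * best" | "t = 1"
    using assms(1,2) best(1) unfolding run_history_def by fastforce
  then have "rho t < 2 * \<alpha> * best \<or> rho t = \<epsilon>"
  proof cases
    case 1
    then show ?thesis
      using \<open>2 * best \<le> 2 * \<alpha> * best\<close> by linarith
  next
    case 2
    then show ?thesis
      using alpha_gt_1 by (simp add: divide_less_eq algebra_simps)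
  next
    case 3
    then show ?thesis
      using rho_1 by simp
  qed
  ultimately show ?thesis
    using eps_pos best(2) by linarith
qed

lemma budget_feasible_subset:
  assumes "S \<subseteq> N" "sum c S \<le> B"
  shows "S \<subseteq> {u \<in> N. c u \<le> B}"
proof
  fix u
  assume "u \<in> S"
  then have "c u \<le> sum c S"
    using assms(1) cost_nonneg finite_subset[OF assms(1) finite_N] by (intro member_le_sum) auto
  then show "u \<in> {u \<in> N. c u \<le> B}"
    using \<open>u \<in> S\<close> assms by auto
qed

lemma sum_cost_disjoint_le:
  assumes "X \<union> Y \<union> Z \<subseteq> A" "A \<subseteq> N" "X \<inter> Y = {}" "X \<inter> Z = {}" "Y \<inter> Z = {}"
  shows "sum c X + sum c Y + sum c Z \<le> sum c A"
proof -
  have "finite A"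
    using assms(2) finite_N finite_subset by blast
  then have "finite X" "finite Y" "finite Z"
    using assms(1) finite_subset by auto
  then have "sum c X + sum c Y + sum c Z = sum c (X \<union> Y \<union> Z)"
    using assms(3-5) by (simp add: sum.union_disjoint Int_Un_distrib2)
  also have "\<dots> \<le> sum c A"
    by (rule sum_mono2[OF \<open>finite A\<close> assms(1)]) (use assms(2) cost_nonneg in auto)
  finally show ?thesis .
qed

lemma weighted_costs_le:
  assumes "0 \<le> y" "y \<le> \<rho>" "0 \<le> a" "0 \<le> b" "0 \<le> d" "a + b + d \<le> C" "C \<le> B"
  shows "2 * rate y * a + 2 * rate y * b + 2 * rate \<rho> * d \<le> 8 * C + 2 * \<rho>"
proof -
  have "rate y \<le> rate \<rho>"
    using assms(2) budget_pos by (simp add: divide_right_mono)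
  then have "2 * rate y * a \<le> 2 * rate \<rho> * a" "2 * rate y * b \<le> 2 * rate \<rho> * b"
    using assms(3,4) by (simp_all add: mult_right_mono)
  moreover have "2 * rate \<rho> * (a + b + d) = 2 * rate \<rho> * a + 2 * rate \<rho> * b + 2 * rate \<rho> * d"
    by (simp add: distrib_left)
  ultimately have "2 * rate y * a + 2 * rate y * b + 2 * rate \<rho> * d \<le> 2 * rate \<rho> * (a + b + d)"
    by linarith
  also have "\<dots> \<le> 2 * rate \<rho> * C"
    using assms(1,2,6) rate_ge_4[of \<rho>] by (intro mult_left_mono) auto
  also have "\<dots> = 8 * C + 2 * (\<rho> / B * C)"
    by (simp add: algebra_simps)
  also have "\<rho> / B * C \<le> \<rho> / B * B"
    using assms(1,2,7) budget_pos by (intro mult_left_mono) auto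
  also have "\<dots> = \<rho>"
    using budget_pos by simp
  finally show ?thesis
    by simp
qed

lemma opt_value_le:
  assumes inv: "run_invariant t R p us Sp Sc" and stop: "bfm_stop 2 R us Sp Sc"
    and Opt: "Opt \<subseteq> N" "sum c Opt \<le> B"
    and best: "\<forall>A\<in>{us, Sp 1, Sp 2, Sc 1, Sc 2}. v A - sum p A \<le> best"
  shows "v Opt \<le> 8 / (3 * (\<alpha> - 1)) * (rho t / \<alpha>) + 12 * best + 8 * sum c Opt + 2 * rho t"
proof -
  have state: "run_state t R p us Sp Sc"
    using inv unfolding run_invariant_def by blast
  obtain Old Rp Rc where cover: "{u \<in> N. c u \<le> B} - R \<subseteq> Old \<union> Rp \<union> Rc"
    and pairs: "greedy_pair (Sp 1) (Sp 2) Rp (rate (rho t / \<alpha>))" "greedy_pair (Sc 1) (Sc 2) Rc (rate (rho t))"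
    and old: "\<forall>T\<subseteq>Old. v T \<le> 8 / (3 * (\<alpha> - 1)) * (rho t / \<alpha>) + 2 * rate (rho t / \<alpha>) * sum c T"
    using inv unfolding run_invariant_def run_rejections_def by blast
  have cand_le: "v A \<le> 4 / 3 * best" if "A \<in> {us, Sp 1, Sp 2, Sc 1, Sc 2}" for A
    using run_state_candidate(2)[OF state that] best that by fastforce
  have "0 \<le> best"
    by (rule surplus_bound_nonneg[OF state best])
  have y: "0 \<le> rho t / \<alpha>" "rho t / \<alpha> \<le> rho t"
    using rho_pos[of t] alpha_gt_1 by (simp_all add: divide_le_eq)
  define T1 where "T1 = Opt \<inter> Old"
  define T2 where "T2 = (Opt - Old) \<inter> (Rp \<union> Sp 1 \<union> Sp 2)"
  define T3 where "T3 = (Opt - Old - T2) \<inter> (Rc \<union> Sc 1 \<union> Sc 2)"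
  define T4 where "T4 = Opt - Old - T2 - T3"
  have parts: "T1 \<subseteq> N" "T2 \<subseteq> N" "T3 \<subseteq> N" "T4 \<subseteq> N" "Opt = T1 \<union> T2 \<union> T3 \<union> T4"
    using Opt(1) unfolding T1_def T2_def T3_def T4_def by auto
  have costs: "sum c T1 + sum c (T2 \<inter> Rp) + sum c (T3 \<inter> Rc) \<le> sum c Opt"
    by (rule sum_cost_disjoint_le[OF _ Opt(1)]) (auto simp: T1_def T2_def T3_def)
  have "T4 \<subseteq> us"
    using budget_feasible_subset[OF Opt] cover stop state
    unfolding T1_def T2_def T3_def T4_def bfm_stop_def run_state_def atLeastAtMost_1_2 by auto
  then have "T4 = {} \<or> T4 = us"
    using state unfolding run_state_def by auto
  then have "v T4 \<le> 4 / 3 * best"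
    using cand_le[of us] normalized_v \<open>0 \<le> best\<close> unfolding normalized_def by auto
  moreover have "v Opt \<le> v T1 + v T2 + v T3 + v T4"
    using submodular_on_subadditive4[OF submodular_v finite_N nonneg_v parts(1-4)] parts(5) by simp
  moreover have "v T1 \<le> 8 / (3 * (\<alpha> - 1)) * (rho t / \<alpha>) + 2 * rate (rho t / \<alpha>) * sum c T1"
    using old unfolding T1_def by blast
  moreover have "v T2 \<le> 2 * (v (Sp 1) + v (Sp 2)) + 2 * rate (rho t / \<alpha>) * sum c (T2 \<inter> Rp)"
    by (rule greedy_pair_value_le_twice[OF pairs(1)]) (use rate_ge_4[OF y(1)] in \<open>auto simp: T2_def\<close>)
  moreover have "v T3 \<le> 2 * (v (Sc 1) + v (Sc 2)) + 2 * rate (rho t) * sum c (T3 \<inter> Rc)"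
    by (rule greedy_pair_value_le_twice[OF pairs(2)])
       (use rate_ge_4[OF less_imp_le[OF rho_pos]] in \<open>auto simp: T3_def\<close>)
  moreover have "2 * rate (rho t / \<alpha>) * sum c T1 + 2 * rate (rho t / \<alpha>) * sum c (T2 \<inter> Rp)
      + 2 * rate (rho t) * sum c (T3 \<inter> Rc) \<le> 8 * sum c Opt + 2 * rho t"
    by (rule weighted_costs_le[OF y cost_sum_nonneg cost_sum_nonneg cost_sum_nonneg costs Opt(2)])
       (use parts in auto)
  ultimately show ?thesis
    using cand_le[of "Sp 1"] cand_le[of "Sp 2"] cand_le[of "Sc 1"] cand_le[of "Sc 2"] by auto
qed

end

lemma bfm_swm_outputE:
  assumes "bfm_swm_output N ord v c B \<alpha> \<beta> \<epsilon> 2 Sstar p"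
  obtains M R us Sp Sc where "1 \<le> M" "bfm_run N ord v c B \<alpha> \<beta> \<epsilon> 2 M R p us Sp Sc"
    and "bfm_stop 2 R us Sp Sc" and "Sstar \<in> {us, Sp 1, Sp 2, Sc 1, Sc 2}"
    and "\<forall>A\<in>{us, Sp 1, Sp 2, Sc 1, Sc 2}. v A - sum p A \<le> v Sstar - sum p Sstar"
proof -
  have two: "{S i | i. i \<in> {1..2::nat}} = {S 1, S 2}" for S :: "nat \<Rightarrow> 'a set"
    unfolding atLeastAtMost_1_2 by auto
  obtain M R us Sp Sc where "1 \<le> M" "bfm_run N ord v c B \<alpha> \<beta> \<epsilon> 2 M R p us Sp Sc"
    "bfm_stop 2 R us Sp Sc"
    and "Sstar \<in> {Sp i | i. i \<in> {1..2}} \<union> {Sc i | i. i \<in> {1..2}} \<union> {us}"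
    and "\<forall>A\<in>{Sp i | i. i \<in> {1..2}} \<union> {Sc i | i. i \<in> {1..2}} \<union> {us}.
      v A - sum p A \<le> v Sstar - sum p Sstar"
    using assms unfolding bfm_swm_output_def Let_def by blast
  moreover have "{Sp i | i. i \<in> {1..2}} \<union> {Sc i | i. i \<in> {1..2}} \<union> {us} = {us, Sp 1, Sp 2, Sc 1, Sc 2}"
    unfolding two by auto
  ultimately show ?thesis
    using that by (metis (no_types, lifting))
qed

lemma approximation_constant_arith:
  fixes best \<epsilon> cO r vO :: real
  defines "\<alpha> \<equiv> 1 + 2 * sqrt 6 / 3"
  assumes "0 \<le> best" "0 < \<epsilon>" "0 \<le> cO" "0 \<le> r" "r \<le> 2 * \<alpha> * best + \<epsilon>"
    and "vO \<le> 8 / (3 * (\<alpha> - 1)) * (r / \<alpha>) + 12 * best + 8 * cO + 2 * r"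
  shows "0.0328 * vO \<le> best + cO + \<epsilon> / 4"
proof -
  have "12 / 5 \<le> sqrt 6"
    by (rule real_le_rsqrt) (simp add: power2_eq_square)
  moreover have "sqrt 6 \<le> sqrt ((99 / 40)\<^sup>2)"
    by (rule real_sqrt_le_mono) (simp add: power2_eq_square)
  ultimately have \<alpha>: "13 / 5 \<le> \<alpha>" "\<alpha> \<le> 53 / 20"
    unfolding \<alpha>_def by auto
  have "3 * (8 / 5) * (13 / 5) \<le> 3 * (\<alpha> - 1) * \<alpha>"
    using \<alpha> by (intro mult_mono) auto
  then have "8 / (3 * (\<alpha> - 1) * \<alpha>) \<le> 13 / 20"
    by (simp add: divide_le_eq)
  then have "r * (8 / (3 * (\<alpha> - 1) * \<alpha>)) \<le> r * (13 / 20)"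
    using assms(5) by (intro mult_left_mono) auto
  then have "8 / (3 * (\<alpha> - 1)) * (r / \<alpha>) \<le> 13 / 20 * r"
    by (simp add: field_simps)
  moreover have "2 * \<alpha> * best \<le> 53 / 10 * best"
    using \<alpha> assms(2) by (intro mult_right_mono) auto
  ultimately have "vO \<le> 5209 / 200 * best + 53 / 20 * \<epsilon> + 8 * cO"
    using assms(6,7) by linarith
  then show ?thesis
    using assms(2-4) by simp
qed

theorem theorem4p8:
  fixes N :: "'a set" and ord :: "'a list" and v :: "'a set \<Rightarrow> real" and c :: "'a \<Rightarrow> real"
    and B \<epsilon> :: real and Opt Sstar :: "'a set" and p :: "'a \<Rightarrow> real"
  assumes "finite N"
    and "distinct ord" and "set ord = N"
    and "normalized v" and "nonneg_on N v" and "submodular_on N v"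
    and "\<forall>u\<in>N. c u \<ge> 0"
    and "B > 0" and "\<epsilon> > 0"
    and "Opt \<subseteq> N" and "sum c Opt \<le> B"
    and "\<forall>S. S \<subseteq> N \<and> sum c S \<le> B \<longrightarrow> v S - sum c S \<le> v Opt - sum c Opt"
    and "bfm_swm_output N ord v c B (1 + 2 * sqrt 6 / 3) 4 \<epsilon> 2 Sstar p"
  shows "v Sstar - sum c Sstar \<ge> 0.0328 * v Opt - sum c Opt - \<epsilon> / 4"
proof -
  interpret bfm_instance N v c ord B "1 + 2 * sqrt 6 / 3" \<epsilon>
    by unfold_locales (use assms in auto)
  obtain M R us Sp Sc where "1 \<le> M" and run: "bfm_run N ord v c B (1 + 2 * sqrt 6 / 3) 4 \<epsilon> 2 M R p us Sp Sc"
    and stop: "bfm_stop 2 R us Sp Sc" and chosen: "Sstar \<in> {us, Sp 1, Sp 2, Sc 1, Sc 2}"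
    and best: "\<forall>A\<in>{us, Sp 1, Sp 2, Sc 1, Sc 2}. v A - sum p A \<le> v Sstar - sum p Sstar"
    by (rule bfm_swm_outputE[OF assms(13)])
  have inv: "run_invariant M R p us Sp Sc"
    by (rule bfm_run_invariant[OF run])
  then have state: "run_state M R p us Sp Sc" and hist: "run_history M R p us Sp Sc"
    unfolding run_invariant_def by auto
  have "0 \<le> v Sstar - sum p Sstar"
    by (rule surplus_bound_nonneg[OF state best])
  then have "0.0328 * v Opt \<le> (v Sstar - sum p Sstar) + sum c Opt + \<epsilon> / 4"
    using approximation_constant_arith cost_sum_nonneg[OF assms(10)] less_imp_le[OF rho_pos] \<open>\<epsilon> > 0\<close>
      rho_le_surplus_bound[OF hist \<open>1 \<le> M\<close> best] opt_value_le[OF inv stop assms(10,11) best]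
    by blast
  moreover have "sum c Sstar \<le> sum p Sstar"
    using run_state_candidate(1)[OF state chosen] state unfolding run_state_def by (auto intro: sum_mono)
  ultimately show ?thesis
    by linarith
qed

end
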